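(* Let $M$ be a monoid and let $D:M\times M\to\overline{\mathbb N}$ be a mapping. Then the following are equivalent: (i) $D$ is a strict length function for $M$; (ii) $D=D_\chi$ for some strongly faithful elliptic $M$-tree $\chi$. Moreover, if these conditions hold, $\chi$ is unique up to isomorphism of elliptic $M$-trees.
   Context: $\overline{\mathbb N}=\mathbb N\cup\{\omega\}$. A length function for $M$ is $D:M\times M\to\overline{\mathbb N}$ satisfying (L1) $D(m,m')=D(m',m)$; (L2) $D(m',m'')\le D(m,m)$; (L3) $D(m',m'')\le D(m'm,m''m)$; (L4) $D(m,m'')\ge\min\{D(m,m'),D(m',m'')\}$; it is strict if also (L5) $D(m',m'')=D(m,m)\Rightarrow m'=m''$. Rooted trees, rays, maximal rays, uniform rooted trees (all maximal rays have equal length), $\alpha\wedge\beta$ = longest common initial segment of rays, $|\cdot|$ = length. An elliptic $M$-tree is $\chi=(r_0,T,\alpha,\theta)$ with $(r_0,T)$ uniform, $\alpha$ a maximal ray, $\theta$ a monoid homomorphism from $M$ into the monoid of depth-preserving distance-non-increasing self-maps of $\mathrm{Vert}(T)$, such that $\mathrm{Vert}(T)=\bigcup_i\alpha_iM$ (actions extended componentwise to rays). It is strongly faithful if $\alpha m=\alpha m'$ implies $m=m'$. $D_\chi(m,m')=|\alpha m\wedge\alpha m'|$. Isomorphism of elliptic $M$-trees: bijective elliptic contraction carrying $\alpha$ to $\alpha'$ and commuting with the actions. *)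

theory Defs
  imports Main "HOL-Library.Extended_Nat"
begin

text \<open>\<open>\<omega>\<close> is rendered as \<open>\<infinity> :: enat\<close>; the monoid is a type of class \<open>monoid_mult\<close>,
  with \<open>m' m\<close> written \<open>m' * m\<close>.\<close>

definition length_function :: "('m::monoid_mult \<Rightarrow> 'm \<Rightarrow> enat) \<Rightarrow> bool" where
  "length_function D \<longleftrightarrow>
     (\<forall>m m'. D m m' = D m' m) \<and>
     (\<forall>m m' m''. D m' m'' \<le> D m m) \<and>
     (\<forall>m m' m''. D m' m'' \<le> D (m' * m) (m'' * m)) \<and>
     (\<forall>m m' m''. D m m'' \<ge> min (D m m') (D m' m''))"

definition strict_length_function :: "('m::monoid_mult \<Rightarrow> 'm \<Rightarrow> enat) \<Rightarrow> bool" where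
  "strict_length_function D \<longleftrightarrow> length_function D \<and>
     (\<forall>m m' m''. D m' m'' = D m m \<longrightarrow> m' = m'')"

text \<open>A rooted tree \<open>(r0, T)\<close> is given by its vertex set \<open>V\<close>, its root \<open>r0\<close> and the
  parent map \<open>par\<close> (the edges of \<open>T\<close> are the pairs \<open>{v, par v}\<close>, \<open>v \<noteq> r0\<close>).\<close>

definition rooted_tree :: "'v \<Rightarrow> 'v set \<Rightarrow> ('v \<Rightarrow> 'v) \<Rightarrow> bool" where
  "rooted_tree r0 V par \<longleftrightarrow> r0 \<in> V \<and> (\<forall>v\<in>V - {r0}. par v \<in> V) \<and>
     (\<forall>v\<in>V. \<exists>n. (par ^^ n) v = r0)"

definition tadj :: "'v \<Rightarrow> 'v set \<Rightarrow> ('v \<Rightarrow> 'v) \<Rightarrow> 'v \<Rightarrow> 'v \<Rightarrow> bool" where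
  "tadj r0 V par u v \<longleftrightarrow> u \<in> V \<and> v \<in> V \<and>
     ((u \<noteq> r0 \<and> par u = v) \<or> (v \<noteq> r0 \<and> par v = u))"

definition tdist :: "'v \<Rightarrow> 'v set \<Rightarrow> ('v \<Rightarrow> 'v) \<Rightarrow> 'v \<Rightarrow> 'v \<Rightarrow> nat" where
  "tdist r0 V par u v = (LEAST n. \<exists>xs. length xs = Suc n \<and> hd xs = u \<and> last xs = v \<and>
       (\<forall>i<n. tadj r0 V par (xs ! i) (xs ! Suc i)))"

definition tdepth :: "'v \<Rightarrow> 'v set \<Rightarrow> ('v \<Rightarrow> 'v) \<Rightarrow> 'v \<Rightarrow> nat" where
  "tdepth r0 V par v = tdist r0 V par r0 v"

text \<open>Rays: (finite or infinite) paths starting at the root and moving away from it, encoded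
  as \<open>nat \<Rightarrow> 'v option\<close>: \<open>\<rho> i = Some v\<close> iff \<open>v\<close> is the \<open>i\<close>-th vertex of the ray.\<close>

definition is_ray :: "'v \<Rightarrow> 'v set \<Rightarrow> ('v \<Rightarrow> 'v) \<Rightarrow> (nat \<Rightarrow> 'v option) \<Rightarrow> bool" where
  "is_ray r0 V par \<rho> \<longleftrightarrow> \<rho> 0 = Some r0 \<and>
     (\<forall>i. \<rho> i = None \<longrightarrow> \<rho> (Suc i) = None) \<and>
     (\<forall>i w. \<rho> (Suc i) = Some w \<longrightarrow> w \<in> V \<and> w \<noteq> r0 \<and> \<rho> i = Some (par w))"

definition ray_len :: "(nat \<Rightarrow> 'v option) \<Rightarrow> enat" where
  "ray_len \<rho> = (if \<forall>i. \<rho> i \<noteq> None then \<infinity> else enat (LEAST i. \<rho> (Suc i) = None))"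

definition maximal_ray :: "'v \<Rightarrow> 'v set \<Rightarrow> ('v \<Rightarrow> 'v) \<Rightarrow> (nat \<Rightarrow> 'v option) \<Rightarrow> bool" where
  "maximal_ray r0 V par \<rho> \<longleftrightarrow> is_ray r0 V par \<rho> \<and>
     (\<forall>\<sigma>. is_ray r0 V par \<sigma> \<and> \<rho> \<subseteq>\<^sub>m \<sigma> \<longrightarrow> \<sigma> = \<rho>)"

definition uniform_tree :: "'v \<Rightarrow> 'v set \<Rightarrow> ('v \<Rightarrow> 'v) \<Rightarrow> bool" where
  "uniform_tree r0 V par \<longleftrightarrow> rooted_tree r0 V par \<and>
     (\<forall>\<rho> \<sigma>. maximal_ray r0 V par \<rho> \<and> maximal_ray r0 V par \<sigma> \<longrightarrow> ray_len \<rho> = ray_len \<sigma>)"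

definition ray_meet :: "(nat \<Rightarrow> 'v option) \<Rightarrow> (nat \<Rightarrow> 'v option) \<Rightarrow> nat \<Rightarrow> 'v option" where
  "ray_meet \<rho> \<sigma> = (\<lambda>i. if \<forall>j\<le>i. \<rho> j = \<sigma> j then \<rho> i else None)"

definition ray_map :: "('v \<Rightarrow> 'w) \<Rightarrow> (nat \<Rightarrow> 'v option) \<Rightarrow> nat \<Rightarrow> 'w option" where
  "ray_map f \<rho> = (\<lambda>i. map_option f (\<rho> i))"

record ('v, 'm) etree =
  root :: 'v
  verts :: "'v set"
  parent :: "'v \<Rightarrow> 'v"
  axis :: "nat \<Rightarrow> 'v option"
  act :: "'m \<Rightarrow> 'v \<Rightarrow> 'v"

abbreviation edist :: "('v, 'm) etree \<Rightarrow> 'v \<Rightarrow> 'v \<Rightarrow> nat" where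
  "edist \<chi> \<equiv> tdist (root \<chi>) (verts \<chi>) (parent \<chi>)"

abbreviation edepth :: "('v, 'm) etree \<Rightarrow> 'v \<Rightarrow> nat" where
  "edepth \<chi> \<equiv> tdepth (root \<chi>) (verts \<chi>) (parent \<chi>)"

definition elliptic_contraction :: "('v, 'm) etree \<Rightarrow> ('w, 'm) etree \<Rightarrow> ('v \<Rightarrow> 'w) \<Rightarrow> bool" where
  "elliptic_contraction \<chi> \<chi>' f \<longleftrightarrow> f ` verts \<chi> \<subseteq> verts \<chi>' \<and>
     (\<forall>v\<in>verts \<chi>. edepth \<chi>' (f v) = edepth \<chi> v) \<and>
     (\<forall>u\<in>verts \<chi>. \<forall>v\<in>verts \<chi>. edist \<chi>' (f u) (f v) \<le> edist \<chi> u v)"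

text \<open>The action is written on the right (\<open>v m\<close>), so \<open>\<theta>\<close> is a homomorphism into the monoid of
  self-maps of \<open>Vert(T)\<close> with product \<open>f g = g \<circ> f\<close>, i.e. \<open>v (m m') = (v m) m'\<close>.\<close>
definition elliptic_tree :: "('v, 'm::monoid_mult) etree \<Rightarrow> bool" where
  "elliptic_tree \<chi> \<longleftrightarrow>
     uniform_tree (root \<chi>) (verts \<chi>) (parent \<chi>) \<and>
     maximal_ray (root \<chi>) (verts \<chi>) (parent \<chi>) (axis \<chi>) \<and>
     (\<forall>m. elliptic_contraction \<chi> \<chi> (act \<chi> m)) \<and>
     (\<forall>v\<in>verts \<chi>. act \<chi> 1 v = v) \<and>
     (\<forall>m m'. \<forall>v\<in>verts \<chi>. act \<chi> (m * m') v = act \<chi> m' (act \<chi> m v)) \<and>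
     verts \<chi> = {act \<chi> m v | m v. \<exists>i. axis \<chi> i = Some v}"

definition strongly_faithful :: "('v, 'm::monoid_mult) etree \<Rightarrow> bool" where
  "strongly_faithful \<chi> \<longleftrightarrow>
     (\<forall>m m'. ray_map (act \<chi> m) (axis \<chi>) = ray_map (act \<chi> m') (axis \<chi>) \<longrightarrow> m = m')"

definition D_chi :: "('v, 'm::monoid_mult) etree \<Rightarrow> 'm \<Rightarrow> 'm \<Rightarrow> enat" where
  "D_chi \<chi> m m' = ray_len (ray_meet (ray_map (act \<chi> m) (axis \<chi>)) (ray_map (act \<chi> m') (axis \<chi>)))"

definition etree_iso :: "('v, 'm::monoid_mult) etree \<Rightarrow> ('w, 'm) etree \<Rightarrow> ('v \<Rightarrow> 'w) \<Rightarrow> bool" where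
  "etree_iso \<chi> \<chi>' f \<longleftrightarrow> bij_betw f (verts \<chi>) (verts \<chi>') \<and> elliptic_contraction \<chi> \<chi>' f \<and>
     ray_map f (axis \<chi>) = axis \<chi>' \<and>
     (\<forall>m. \<forall>v\<in>verts \<chi>. f (act \<chi> m v) = act \<chi>' m (f v))"

definition etree_isomorphic :: "('v, 'm::monoid_mult) etree \<Rightarrow> ('w, 'm) etree \<Rightarrow> bool" where
  "etree_isomorphic \<chi> \<chi>' \<longleftrightarrow> (\<exists>f. etree_iso \<chi> \<chi>' f)"

end

theory Submission
  imports Defs
begin

(*
  The proof rests on one characterisation: in an elliptic M-tree with axis vertices a_i,
      i <= D_chi m m'   iff   a_i exists and a_i m = a_i m',
  which holds because the action commutes with the parent map (a depth-preserving,
  distance-non-increasing self-map of a rooted tree must send parents to parents), so two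
  images of the axis agree exactly on an initial segment.  From it:
   - D_chi satisfies (L1)-(L4), and (L5) is strong faithfulness;
   - two elliptic M-trees with the same D_chi are isomorphic via  a_i m |-> a'_i m;
   - conversely, for a strict length function D the vertices (i, {x. i <= D m x}),
     i <= D 1 1, with parent map lowering i and the action by right multiplication, form
     a strongly faithful elliptic M-tree whose D_chi is D.
*)

section \<open>Depth and walks in rooted trees\<close>

text \<open>The depth of a vertex measured by the number of parent steps needed to reach the root;
  it agrees with the graph-theoretic depth \<open>tdepth\<close> (lemma \<open>tdepth_eq_pdepth\<close>).\<close>
definition pdepth :: "'v \<Rightarrow> ('v \<Rightarrow> 'v) \<Rightarrow> 'v \<Rightarrow> nat" where
  "pdepth r0 par v = (LEAST n. (par ^^ n) v = r0)"

definition walk :: "'v \<Rightarrow> 'v set \<Rightarrow> ('v \<Rightarrow> 'v) \<Rightarrow> 'v list \<Rightarrow> bool" where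
  "walk r0 V par xs \<longleftrightarrow> successively (tadj r0 V par) xs"

lemma tdist_walk:
  "tdist r0 V par u v =
     (LEAST n. \<exists>xs. length xs = Suc n \<and> hd xs = u \<and> last xs = v \<and> walk r0 V par xs)"
  unfolding tdist_def walk_def successively_conv_nth by (metis Suc_less_eq)

lemma tadj_sym: "tadj r0 V par u v \<longleftrightarrow> tadj r0 V par v u"
  unfolding tadj_def by auto

lemma pdepth_root [simp]: "pdepth r0 par r0 = 0"
  unfolding pdepth_def by simp

context
  fixes r0 :: 'v and V :: "'v set" and par :: "'v \<Rightarrow> 'v"
  assumes rt: "rooted_tree r0 V par"
begin

lemma root_in_V: "r0 \<in> V"
  using rt unfolding rooted_tree_def by blast

lemma parent_in_V: "v \<in> V \<Longrightarrow> v \<noteq> r0 \<Longrightarrow> par v \<in> V"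
  using rt unfolding rooted_tree_def by blast

lemma pdepth_reaches_root: "v \<in> V \<Longrightarrow> (par ^^ pdepth r0 par v) v = r0"
  using rt unfolding rooted_tree_def pdepth_def by (metis (mono_tags, lifting) LeastI_ex)

lemma below_pdepth_not_root: "k < pdepth r0 par v \<Longrightarrow> (par ^^ k) v \<noteq> r0"
  unfolding pdepth_def by (rule not_less_Least)

lemma ancestor_in_V: "v \<in> V \<Longrightarrow> k \<le> pdepth r0 par v \<Longrightarrow> (par ^^ k) v \<in> V"
proof (induction k)
  case (Suc k)
  then have "(par ^^ k) v \<in> V" "(par ^^ k) v \<noteq> r0" using below_pdepth_not_root by auto
  then show ?case by (simp add: parent_in_V)
qed simp

lemma pdepth_eq_0_iff: "v \<in> V \<Longrightarrow> pdepth r0 par v = 0 \<longleftrightarrow> v = r0"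
  using pdepth_reaches_root by fastforce

lemma pdepth_parent:
  assumes "v \<in> V" "v \<noteq> r0"
  shows "pdepth r0 par v = Suc (pdepth r0 par (par v))"
proof -
  let ?d = "pdepth r0 par v"
  have pos: "?d \<noteq> 0" using pdepth_eq_0_iff assms by blast
  have shift: "(par ^^ Suc k) v = (par ^^ k) (par v)" for k
    by (simp only: funpow_Suc_right o_apply)
  have "pdepth r0 par (par v) = ?d - 1"
    unfolding pdepth_def[of r0 par "par v"]
  proof (rule Least_equality)
    show "(par ^^ (?d - 1)) (par v) = r0"
      using pdepth_reaches_root[OF assms(1)] shift[of "?d - 1"] pos by simp
    show "?d - 1 \<le> k" if "(par ^^ k) (par v) = r0" for k
      using that below_pdepth_not_root[of "Suc k" v] shift[of k] by fastforce
  qed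
  then show ?thesis using pos by simp
qed

lemma tadj_pdepth:
  "tadj r0 V par u v \<Longrightarrow>
     pdepth r0 par v = Suc (pdepth r0 par u) \<or> pdepth r0 par u = Suc (pdepth r0 par v)"
  unfolding tadj_def using pdepth_parent by fastforce

lemma walk_pdepth:
  assumes "walk r0 V par xs" "k < length xs"
  shows "pdepth r0 par (xs ! k) \<le> pdepth r0 par (xs ! 0) + k"
  using assms(2)
proof (induction k)
  case (Suc k)
  then have "tadj r0 V par (xs ! k) (xs ! Suc k)"
    using assms(1) unfolding walk_def successively_conv_nth by auto
  then show ?case using Suc tadj_pdepth by fastforce
qed simp

definition root_walk :: "'v \<Rightarrow> 'v list" where
  "root_walk v = map (\<lambda>k. (par ^^ (pdepth r0 par v - k)) v) [0..<Suc (pdepth r0 par v)]"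

lemma root_walk:
  assumes "v \<in> V"
  shows "length (root_walk v) = Suc (pdepth r0 par v)" "hd (root_walk v) = r0"
    "last (root_walk v) = v" "walk r0 V par (root_walk v)"
proof -
  let ?d = "pdepth r0 par v"
  show "length (root_walk v) = Suc ?d" by (simp add: root_walk_def)
  show "hd (root_walk v) = r0"
    using pdepth_reaches_root[OF assms] by (simp add: root_walk_def hd_map del: upt_Suc)
  show "last (root_walk v) = v" by (simp add: root_walk_def last_map del: upt_Suc)
  have "tadj r0 V par (root_walk v ! i) (root_walk v ! Suc i)" if "Suc i < Suc ?d" for i
  proof -
    have "?d - i = Suc (?d - Suc i)" using that by simp
    then have step: "(par ^^ (?d - i)) v = par ((par ^^ (?d - Suc i)) v)"
      by (simp only: funpow.simps(2) o_apply)
    have "(par ^^ (?d - Suc i)) v \<noteq> r0"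
      using below_pdepth_not_root that by (simp add: diff_less)
    moreover have "(par ^^ (?d - Suc i)) v \<in> V" "(par ^^ (?d - i)) v \<in> V"
      using ancestor_in_V assms by auto
    ultimately show ?thesis using that step unfolding root_walk_def tadj_def
      by (simp del: upt_Suc add: nth_map)
  qed
  then show "walk r0 V par (root_walk v)" unfolding walk_def successively_conv_nth
    by (simp add: root_walk_def del: upt_Suc)
qed

lemma tdepth_eq_pdepth:
  assumes "v \<in> V"
  shows "tdepth r0 V par v = pdepth r0 par v"
  unfolding tdepth_def tdist_walk
proof (rule Least_equality)
  show "\<exists>xs. length xs = Suc (pdepth r0 par v) \<and> hd xs = r0 \<and> last xs = v \<and> walk r0 V par xs"
    using root_walk[OF assms] by blast
  fix n assume "\<exists>xs. length xs = Suc n \<and> hd xs = r0 \<and> last xs = v \<and> walk r0 V par xs"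
  then obtain xs where xs: "length xs = Suc n" "hd xs = r0" "last xs = v" "walk r0 V par xs"
    by blast
  moreover have "xs \<noteq> []" using xs(1) by auto
  ultimately have "xs ! n = v" "xs ! 0 = r0" by (simp_all add: last_conv_nth hd_conv_nth)
  then show "pdepth r0 par v \<le> n" using walk_pdepth[OF xs(4), of n] xs(1) by simp
qed

text \<open>Rooted trees are connected: go up from \<open>u\<close> to the root and down to \<open>v\<close>.\<close>
lemma walk_exists:
  assumes "u \<in> V" "v \<in> V"
  shows "\<exists>n xs. length xs = Suc n \<and> hd xs = u \<and> last xs = v \<and> walk r0 V par xs"
proof -
  obtain ys where ys: "root_walk v = r0 # ys"
    using root_walk(1,2)[OF assms(2)] by (cases "root_walk v") auto
  let ?xs = "rev (root_walk u) @ ys"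
  have up: "walk r0 V par (rev (root_walk u))"
    using root_walk(4)[OF assms(1)] unfolding walk_def by (simp add: tadj_sym)
  have "walk r0 V par (r0 # ys)" using root_walk(4)[OF assms(2)] ys by simp
  then have down: "successively (tadj r0 V par) ys" "ys \<noteq> [] \<Longrightarrow> tadj r0 V par r0 (hd ys)"
    unfolding walk_def successively_Cons by auto
  have top: "last (rev (root_walk u)) = r0" using root_walk(2)[OF assms(1)] by (simp add: last_rev)
  have ne: "root_walk u \<noteq> []" using root_walk(1)[OF assms(1)] by auto
  have "walk r0 V par ?xs" using up down top unfolding walk_def successively_append_iff by auto
  moreover have "hd ?xs = u" using root_walk(3)[OF assms(1)] ne by (simp add: hd_rev)
  moreover have "last ?xs = v" using root_walk(3)[OF assms(2)] ys top by (cases "ys = []") auto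
  moreover have "length ?xs = Suc (length ?xs - 1)" using ne by simp
  ultimately show ?thesis by blast
qed

lemma shortest_walk:
  assumes "u \<in> V" "v \<in> V"
  shows "\<exists>xs. length xs = Suc (tdist r0 V par u v) \<and> hd xs = u \<and> last xs = v \<and> walk r0 V par xs"
  using walk_exists[OF assms] unfolding tdist_walk by (auto intro: LeastI)

lemma tdist_parent_le_1:
  assumes "v \<in> V" "v \<noteq> r0"
  shows "tdist r0 V par (par v) v \<le> 1"
proof -
  have "walk r0 V par [par v, v]"
    using assms parent_in_V unfolding walk_def tadj_def by simp
  then show ?thesis unfolding tdist_walk by (intro Least_le exI[of _ "[par v, v]"]) simp
qed

end

section \<open>Contractions of rooted trees\<close>

lemma parent_map_pdepth:
  assumes rt: "rooted_tree r0 V par" and rt': "rooted_tree r0' V' par'"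
    and f_V: "\<And>v. v \<in> V \<Longrightarrow> f v \<in> V'" and f_root: "f r0 = r0'"
    and f_parent: "\<And>v. v \<in> V \<Longrightarrow> v \<noteq> r0 \<Longrightarrow> f v \<noteq> r0' \<and> f (par v) = par' (f v)"
    and v: "v \<in> V"
  shows "pdepth r0' par' (f v) = pdepth r0 par v"
proof -
  have "\<forall>v\<in>V. pdepth r0 par v = n \<longrightarrow> pdepth r0' par' (f v) = n" for n
  proof (induction n)
    case 0
    then show ?case using pdepth_eq_0_iff[OF rt] f_root by auto
  next
    case (Suc n)
    show ?case
    proof (intro ballI impI)
      fix v assume v: "v \<in> V" and dv: "pdepth r0 par v = Suc n"
      then have "v \<noteq> r0" by auto
      then have "pdepth r0' par' (f (par v)) = n"
        using Suc pdepth_parent[OF rt v] parent_in_V[OF rt v] dv by simp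
      moreover have "f v \<in> V'" "f v \<noteq> r0'" using f_V f_parent v \<open>v \<noteq> r0\<close> by auto
      ultimately show "pdepth r0' par' (f v) = Suc n"
        using pdepth_parent[OF rt'] f_parent v \<open>v \<noteq> r0\<close> by simp
    qed
  qed
  then show ?thesis using v by blast
qed

text \<open>Such a map does not increase distances, since it maps walks to walks.\<close>
lemma parent_map_tdist:
  assumes rt: "rooted_tree r0 V par"
    and f_V: "\<And>v. v \<in> V \<Longrightarrow> f v \<in> V'"
    and f_parent: "\<And>v. v \<in> V \<Longrightarrow> v \<noteq> r0 \<Longrightarrow> f v \<noteq> r0' \<and> f (par v) = par' (f v)"
    and u: "u \<in> V" and v: "v \<in> V"
  shows "tdist r0' V' par' (f u) (f v) \<le> tdist r0 V par u v"
proof -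
  obtain xs where xs: "length xs = Suc (tdist r0 V par u v)" "hd xs = u" "last xs = v"
    "walk r0 V par xs"
    using shortest_walk[OF rt u v] by blast
  have "tadj r0' V' par' (f x) (f y)" if "tadj r0 V par x y" for x y
    using that f_V f_parent unfolding tadj_def by metis
  then have "walk r0' V' par' (map f xs)"
    using xs(4) unfolding walk_def successively_map by (rule successively_mono[rotated])
  moreover have "length (map f xs) = Suc (tdist r0 V par u v)" "hd (map f xs) = f u"
    "last (map f xs) = f v"
    using xs by (auto simp: hd_map last_map simp flip: length_greater_0_conv)
  ultimately show ?thesis
    unfolding tdist_walk[of r0' V' par'] by (intro Least_le) blast
qed

lemma parent_map_elliptic_contraction:
  assumes rt: "rooted_tree (root \<chi>) (verts \<chi>) (parent \<chi>)"
    and rt': "rooted_tree (root \<chi>') (verts \<chi>') (parent \<chi>')"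
    and f_V: "\<And>v. v \<in> verts \<chi> \<Longrightarrow> f v \<in> verts \<chi>'" and f_root: "f (root \<chi>) = root \<chi>'"
    and f_parent: "\<And>v. v \<in> verts \<chi> \<Longrightarrow> v \<noteq> root \<chi> \<Longrightarrow>
      f v \<noteq> root \<chi>' \<and> f (parent \<chi> v) = parent \<chi>' (f v)"
  shows "elliptic_contraction \<chi> \<chi>' f"
  unfolding elliptic_contraction_def
proof (intro conjI ballI image_subsetI)
  show "f v \<in> verts \<chi>'" if "v \<in> verts \<chi>" for v using f_V that .
  show "edepth \<chi>' (f v) = edepth \<chi> v" if v: "v \<in> verts \<chi>" for v
    using parent_map_pdepth[OF rt rt' f_V f_root f_parent v] tdepth_eq_pdepth[OF rt v]
      tdepth_eq_pdepth[OF rt' f_V[OF v]]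
    by simp
  show "edist \<chi>' (f u) (f v) \<le> edist \<chi> u v" if "u \<in> verts \<chi>" "v \<in> verts \<chi>" for u v
    using rt f_V f_parent that by (rule parent_map_tdist)
qed

text \<open>Conversely, a depth-preserving, distance-non-increasing map commutes with the parent
  maps: it sends the edge \<open>{par v, v}\<close> to a pair at distance at most one whose depths differ
  by one, i.e.\ to an edge.\<close>
lemma contraction_commutes_parent:
  assumes rt: "rooted_tree r0 V par" and rt': "rooted_tree r0' V' par'"
    and f_V: "\<And>v. v \<in> V \<Longrightarrow> f v \<in> V'"
    and f_depth: "\<And>v. v \<in> V \<Longrightarrow> pdepth r0' par' (f v) = pdepth r0 par v"
    and f_dist: "\<And>u v. u \<in> V \<Longrightarrow> v \<in> V \<Longrightarrow> tdist r0' V' par' (f u) (f v) \<le> tdist r0 V par u v"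
    and v: "v \<in> V" "v \<noteq> r0"
  shows "f (par v) = par' (f v)"
proof -
  let ?x = "f (par v)" and ?y = "f v"
  have pv: "par v \<in> V" using parent_in_V[OF rt v] .
  have dy: "pdepth r0' par' ?y = Suc (pdepth r0' par' ?x)"
    using f_depth pv v pdepth_parent[OF rt v] by simp
  have close: "tdist r0' V' par' ?x ?y \<le> 1"
    using f_dist[OF pv v(1)] tdist_parent_le_1[OF rt v] by linarith
  obtain xs where xs: "length xs = Suc (tdist r0' V' par' ?x ?y)" "hd xs = ?x" "last xs = ?y"
    "walk r0' V' par' xs"
    using shortest_walk[OF rt' f_V[OF pv] f_V[OF v(1)]] by blast
  have "tdist r0' V' par' ?x ?y \<noteq> 0"
  proof
    assume "tdist r0' V' par' ?x ?y = 0"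
    then have "length xs = 1" using xs(1) by simp
    then have "?x = ?y" using xs(2,3) by (cases xs) auto
    then show False using dy by simp
  qed
  then have "length xs = 2" using xs(1) close by simp
  then obtain p q where "xs = [p, q]"
    by (metis length_0_conv length_Suc_conv numeral_2_eq_2)
  then have "tadj r0' V' par' ?x ?y" using xs(2-4) unfolding walk_def by simp
  then show ?thesis using dy unfolding tadj_def using pdepth_parent[OF rt'] by force
qed

section \<open>Rays\<close>

lemma is_rayD:
  assumes "is_ray r0 V par \<rho>"
  shows "\<rho> 0 = Some r0" "\<rho> i = None \<Longrightarrow> \<rho> (Suc i) = None"
    "\<rho> (Suc i) = Some w \<Longrightarrow> w \<in> V \<and> w \<noteq> r0 \<and> \<rho> i = Some (par w)"
  using assms unfolding is_ray_def by blast+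

lemma ray_len_ge_iff:
  assumes "\<rho> 0 \<noteq> None" "\<And>i. \<rho> i = None \<Longrightarrow> \<rho> (Suc i) = None"
  shows "\<rho> i \<noteq> None \<longleftrightarrow> enat i \<le> ray_len \<rho>"
proof (cases "\<forall>i. \<rho> i \<noteq> None")
  case True then show ?thesis by (simp add: ray_len_def)
next
  case False
  have undef_up: "\<rho> j = None" if "\<rho> i = None" "i \<le> j" for i j
    using that(2,1) by (induction j rule: dec_induct) (auto intro: assms(2))
  define k where "k = (LEAST k. \<rho> (Suc k) = None)"
  obtain i0 where "\<rho> i0 = None" using False by blast
  with assms(1) obtain k0 where "\<rho> (Suc k0) = None" by (cases i0) auto
  then have k_undef: "\<rho> (Suc k) = None" unfolding k_def by (rule LeastI)
  have below_k: "\<rho> (Suc j) \<noteq> None" if "j < k" for j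
    using that not_less_Least unfolding k_def by blast
  have "\<rho> i \<noteq> None \<longleftrightarrow> i \<le> k"
  proof
    assume def: "\<rho> i \<noteq> None"
    show "i \<le> k"
    proof (rule ccontr)
      assume "\<not> i \<le> k"
      then have "Suc k \<le> i" by simp
      then have "\<rho> i = None" by (rule undef_up[OF k_undef])
      then show False using def by contradiction
    qed
  next
    assume "i \<le> k"
    then show "\<rho> i \<noteq> None" using assms(1) below_k by (cases i) auto
  qed
  moreover have "ray_len \<rho> = enat k"
    unfolding ray_len_def k_def by (simp only: False if_False)
  ultimately show ?thesis by simp
qed

lemma ray_defined_iff:
  assumes "is_ray r0 V par \<rho>"
  shows "\<rho> i \<noteq> None \<longleftrightarrow> enat i \<le> ray_len \<rho>"
  by (rule ray_len_ge_iff) (simp add: is_rayD(1)[OF assms], rule is_rayD(2)[OF assms])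

lemma enat_le_by_nat: assumes "\<And>i. enat i \<le> x \<Longrightarrow> enat i \<le> y" shows "x \<le> y"
proof (cases x)
  case (enat a) then show ?thesis using assms[of a] by simp
next
  case infinity
  have "y = \<infinity>"
  proof (cases y)
    case (enat b) then show ?thesis using assms[of "Suc b"] infinity by simp
  qed simp
  then show ?thesis by simp
qed

lemma enat_eq_by_nat: "(\<And>i. enat i \<le> x \<longleftrightarrow> enat i \<le> y) \<Longrightarrow> x = y"
  by (rule order_antisym; rule enat_le_by_nat) simp_all

lemma ray_vertex:
  assumes rt: "rooted_tree r0 V par" and ray: "is_ray r0 V par \<rho>"
  shows "\<rho> i = Some w \<Longrightarrow> w \<in> V \<and> pdepth r0 par w = i"
proof (induction i arbitrary: w)
  case 0 then show ?case using is_rayD(1)[OF ray] root_in_V[OF rt] by simp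
next
  case (Suc i)
  then have "w \<in> V" "w \<noteq> r0" "\<rho> i = Some (par w)" using is_rayD(3)[OF ray] by blast+
  then show ?case using Suc.IH pdepth_parent[OF rt] by simp
qed

lemma maximal_ray_continues:
  assumes max: "maximal_ray r0 V par \<rho>" and at: "\<rho> i = Some (par w)"
    and w: "w \<in> V" "w \<noteq> r0"
  shows "\<rho> (Suc i) \<noteq> None"
proof
  assume stop: "\<rho> (Suc i) = None"
  have ray: "is_ray r0 V par \<rho>" using max unfolding maximal_ray_def by blast
  note start = is_rayD(1)[OF ray] and down = is_rayD(2)[OF ray] and up = is_rayD(3)[OF ray]
  define \<sigma> where "\<sigma> = \<rho>(Suc i := Some w)"
  have "is_ray r0 V par \<sigma>"
    unfolding is_ray_def
  proof (rule conjI[OF _ conjI]; (intro allI impI)?)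
    show "\<sigma> 0 = Some r0" using start unfolding \<sigma>_def by simp
    show "\<sigma> (Suc j) = None" if none: "\<sigma> j = None" for j
    proof -
      have "j \<noteq> i" using none at unfolding \<sigma>_def by (cases "i = j") auto
      moreover have "\<rho> j = None" using none unfolding \<sigma>_def by (metis fun_upd_apply option.distinct(1))
      ultimately show ?thesis using down unfolding \<sigma>_def by simp
    qed
    show "u \<in> V \<and> u \<noteq> r0 \<and> \<sigma> j = Some (par u)" if some: "\<sigma> (Suc j) = Some u" for j u
    proof (cases "j = i")
      case True then show ?thesis using some at w unfolding \<sigma>_def by simp
    next
      case False
      then have "\<rho> (Suc j) = Some u" using some unfolding \<sigma>_def by simp
      moreover have "j \<noteq> Suc i" using calculation down[OF stop] by auto
      ultimately show ?thesis using up False unfolding \<sigma>_def by simp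
    qed
  qed
  moreover have "\<rho> \<subseteq>\<^sub>m \<sigma>" unfolding map_le_def \<sigma>_def using stop by auto
  ultimately have "\<sigma> = \<rho>" using max unfolding maximal_ray_def by blast
  then show False using stop unfolding \<sigma>_def by (metis fun_upd_same option.distinct(1))
qed

lemma ray_meet_len_ge_iff:
  assumes "\<rho> 0 = \<sigma> 0" "\<rho> 0 \<noteq> None" "\<And>j. \<rho> j = None \<Longrightarrow> \<rho> (Suc j) = None"
  shows "enat i \<le> ray_len (ray_meet \<rho> \<sigma>) \<longleftrightarrow> \<rho> i \<noteq> None \<and> (\<forall>k\<le>i. \<rho> k = \<sigma> k)"
proof -
  have meet: "ray_meet \<rho> \<sigma> j \<noteq> None \<longleftrightarrow> \<rho> j \<noteq> None \<and> (\<forall>k\<le>j. \<rho> k = \<sigma> k)" for j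
    by (simp add: ray_meet_def)
  have "ray_meet \<rho> \<sigma> 0 \<noteq> None" using meet assms(1,2) by simp
  moreover have "ray_meet \<rho> \<sigma> (Suc j) = None" if "ray_meet \<rho> \<sigma> j = None" for j
    using that assms(3)[of j] unfolding ray_meet_def by (auto split: if_splits)
  ultimately show ?thesis using ray_len_ge_iff[of "ray_meet \<rho> \<sigma>" i] meet by simp
qed

section \<open>Elliptic M-trees and their length functions\<close>

locale elliptic_M_tree =
  fixes \<chi> :: "('v, 'm::monoid_mult) etree"
  assumes elliptic: "elliptic_tree \<chi>"
begin

text \<open>The \<open>i\<close>-th vertex of the axis (meaningful while the axis is defined at \<open>i\<close>).\<close>
definition axv :: "nat \<Rightarrow> 'v" where
  "axv i = the (axis \<chi> i)"

lemma tree: "rooted_tree (root \<chi>) (verts \<chi>) (parent \<chi>)"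
  using elliptic unfolding elliptic_tree_def uniform_tree_def by blast

lemma axis_ray: "is_ray (root \<chi>) (verts \<chi>) (parent \<chi>) (axis \<chi>)"
  using elliptic unfolding elliptic_tree_def maximal_ray_def by blast

lemma act_contraction: "elliptic_contraction \<chi> \<chi> (act \<chi> m)"
  using elliptic unfolding elliptic_tree_def by blast

lemma act_one: "v \<in> verts \<chi> \<Longrightarrow> act \<chi> 1 v = v"
  using elliptic unfolding elliptic_tree_def by blast

lemma act_mult: "v \<in> verts \<chi> \<Longrightarrow> act \<chi> (m * m') v = act \<chi> m' (act \<chi> m v)"
  using elliptic unfolding elliptic_tree_def by blast

lemma act_in_verts: "v \<in> verts \<chi> \<Longrightarrow> act \<chi> m v \<in> verts \<chi>"
  using act_contraction unfolding elliptic_contraction_def by blast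

lemma act_pdepth:
  assumes "v \<in> verts \<chi>"
  shows "pdepth (root \<chi>) (parent \<chi>) (act \<chi> m v) = pdepth (root \<chi>) (parent \<chi>) v"
proof -
  have "edepth \<chi> (act \<chi> m v) = edepth \<chi> v"
    using act_contraction[of m] assms unfolding elliptic_contraction_def by blast
  then show ?thesis
    using tdepth_eq_pdepth[OF tree assms] tdepth_eq_pdepth[OF tree act_in_verts[OF assms]] by simp
qed

lemma act_dist:
  "u \<in> verts \<chi> \<Longrightarrow> v \<in> verts \<chi> \<Longrightarrow> edist \<chi> (act \<chi> m u) (act \<chi> m v) \<le> edist \<chi> u v"
  using act_contraction[of m] unfolding elliptic_contraction_def by blast

lemma act_root: "act \<chi> m (root \<chi>) = root \<chi>"
  using act_pdepth[OF root_in_V[OF tree]] pdepth_eq_0_iff[OF tree] act_in_verts root_in_V[OF tree]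
  by simp

lemma act_parent:
  assumes "v \<in> verts \<chi>" "v \<noteq> root \<chi>"
  shows "act \<chi> m (parent \<chi> v) = parent \<chi> (act \<chi> m v)"
  by (rule contraction_commutes_parent[OF tree tree act_in_verts act_pdepth act_dist assms])

lemma axis_vertex:
  "axis \<chi> i \<noteq> None \<Longrightarrow>
     axis \<chi> i = Some (axv i) \<and> axv i \<in> verts \<chi> \<and> pdepth (root \<chi>) (parent \<chi>) (axv i) = i"
  using ray_vertex[OF tree axis_ray] by (auto simp: axv_def)

lemma axis_defined_below: "axis \<chi> i \<noteq> None \<Longrightarrow> j \<le> i \<Longrightarrow> axis \<chi> j \<noteq> None"
  using ray_defined_iff[OF axis_ray] by (meson enat_ord_simps(1) order_trans)

lemma axv_parent:
  assumes "axis \<chi> (Suc i) \<noteq> None"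
  shows "parent \<chi> (axv (Suc i)) = axv i" "axv (Suc i) \<noteq> root \<chi>" "axv (Suc i) \<in> verts \<chi>"
  using is_rayD(3)[OF axis_ray, of i "axv (Suc i)"] axis_vertex[OF assms]
    axis_vertex[OF axis_defined_below[OF assms, of i]]
  by auto

lemma act_agree_below:
  assumes "axis \<chi> i \<noteq> None" "j \<le> i" "act \<chi> m (axv i) = act \<chi> m' (axv i)"
  shows "act \<chi> m (axv j) = act \<chi> m' (axv j)"
  using assms(2,3)
proof (induction j rule: inc_induct)
  case (step n)
  have "axis \<chi> (Suc n) \<noteq> None" using axis_defined_below[OF assms(1)] step(2) by simp
  note up = axv_parent[OF this]
  have "act \<chi> m (axv n) = parent \<chi> (act \<chi> m (axv (Suc n)))"
    using act_parent[OF up(3,2)] up(1) by simp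
  also have "\<dots> = parent \<chi> (act \<chi> m' (axv (Suc n)))" using step by simp
  also have "\<dots> = act \<chi> m' (axv n)" using act_parent[OF up(3,2)] up(1) by simp
  finally show ?case .
qed

lemma D_chi_ge_iff:
  "enat i \<le> D_chi \<chi> m m' \<longleftrightarrow> axis \<chi> i \<noteq> None \<and> act \<chi> m (axv i) = act \<chi> m' (axv i)"
proof -
  let ?\<rho> = "ray_map (act \<chi> m) (axis \<chi>)" and ?\<sigma> = "ray_map (act \<chi> m') (axis \<chi>)"
  have "?\<rho> 0 = ?\<sigma> 0" "?\<rho> 0 \<noteq> None"
    using is_rayD(1)[OF axis_ray] act_root by (simp_all add: ray_map_def)
  moreover have "?\<rho> (Suc j) = None" if "?\<rho> j = None" for j
    using that is_rayD(2)[OF axis_ray, of j] by (simp add: ray_map_def)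
  ultimately have "enat i \<le> D_chi \<chi> m m' \<longleftrightarrow> ?\<rho> i \<noteq> None \<and> (\<forall>k\<le>i. ?\<rho> k = ?\<sigma> k)"
    unfolding D_chi_def by (rule ray_meet_len_ge_iff)
  also have "\<dots> \<longleftrightarrow> axis \<chi> i \<noteq> None \<and> act \<chi> m (axv i) = act \<chi> m' (axv i)"
  proof
    assume "?\<rho> i \<noteq> None \<and> (\<forall>k\<le>i. ?\<rho> k = ?\<sigma> k)"
    then show "axis \<chi> i \<noteq> None \<and> act \<chi> m (axv i) = act \<chi> m' (axv i)"
      using axis_vertex[of i] by (auto simp: ray_map_def)
  next
    assume agree: "axis \<chi> i \<noteq> None \<and> act \<chi> m (axv i) = act \<chi> m' (axv i)"
    have "?\<rho> k = ?\<sigma> k" if "k \<le> i" for k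
    proof -
      have "axis \<chi> k = Some (axv k)"
        using axis_vertex axis_defined_below[OF _ that] agree by blast
      then show ?thesis
        using act_agree_below[OF _ that, of m m'] agree by (simp add: ray_map_def)
    qed
    then show "?\<rho> i \<noteq> None \<and> (\<forall>k\<le>i. ?\<rho> k = ?\<sigma> k)" using agree by (simp add: ray_map_def)
  qed
  finally show ?thesis .
qed

lemma axis_defined_iff: "axis \<chi> i \<noteq> None \<longleftrightarrow> enat i \<le> D_chi \<chi> 1 1"
  using D_chi_ge_iff by simp

lemma vertex_on_axis_orbit:
  assumes "v \<in> verts \<chi>"
  obtains m i where "axis \<chi> i \<noteq> None" "v = act \<chi> m (axv i)"
proof -
  obtain m w i where "v = act \<chi> m w" "axis \<chi> i = Some w"
    using assms elliptic unfolding elliptic_tree_def by blast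
  then show ?thesis using that axis_vertex[of i] by auto
qed

text \<open>(L1)--(L4) for \<open>D_chi\<close>, each read off from \<open>D_chi_ge_iff\<close> level by level.\<close>
lemma D_chi_length_function: "length_function (D_chi \<chi>)"
  unfolding length_function_def
proof (intro conjI allI)
  fix m m' m''
  show "D_chi \<chi> m m' = D_chi \<chi> m' m"
    by (rule enat_eq_by_nat) (auto simp: D_chi_ge_iff)
  show "D_chi \<chi> m' m'' \<le> D_chi \<chi> m m"
    by (rule enat_le_by_nat) (simp add: D_chi_ge_iff)
  show "min (D_chi \<chi> m m') (D_chi \<chi> m' m'') \<le> D_chi \<chi> m m''"
    by (rule enat_le_by_nat) (auto simp: D_chi_ge_iff)
  show "D_chi \<chi> m' m'' \<le> D_chi \<chi> (m' * m) (m'' * m)"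
  proof (rule enat_le_by_nat)
    fix i assume "enat i \<le> D_chi \<chi> m' m''"
    then have i: "axis \<chi> i \<noteq> None" and "act \<chi> m' (axv i) = act \<chi> m'' (axv i)"
      using D_chi_ge_iff by auto
    then show "enat i \<le> D_chi \<chi> (m' * m) (m'' * m)"
      using D_chi_ge_iff act_mult axis_vertex[OF i] by simp
  qed
qed

text \<open>(L5) is strong faithfulness: \<open>D_chi m' m'' = D_chi m m\<close> says that the images of the
  axis under \<open>m'\<close> and \<open>m''\<close> coincide.\<close>
lemma D_chi_strict:
  assumes "strongly_faithful \<chi>"
  shows "strict_length_function (D_chi \<chi>)"
  unfolding strict_length_function_def
proof (intro conjI allI impI D_chi_length_function)
  fix m m' m'' assume eq: "D_chi \<chi> m' m'' = D_chi \<chi> m m"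
  have "ray_map (act \<chi> m') (axis \<chi>) j = ray_map (act \<chi> m'') (axis \<chi>) j" for j
  proof (cases "axis \<chi> j = None")
    case False
    then have "act \<chi> m' (axv j) = act \<chi> m'' (axv j)" using eq D_chi_ge_iff by metis
    then show ?thesis using axis_vertex[OF False] by (simp add: ray_map_def)
  qed (simp add: ray_map_def)
  then show "m' = m''" using assms unfolding strongly_faithful_def by blast
qed

end

section \<open>Uniqueness\<close>

text \<open>Two elliptic M-trees with the same length function; the isomorphism sends the vertex
  \<open>a_i m\<close> of the first to the vertex \<open>a'_i m\<close> of the second.\<close>
locale elliptic_M_tree_pair = X: elliptic_M_tree \<chi> + Y: elliptic_M_tree \<chi>'
  for \<chi> :: "('v, 'm::monoid_mult) etree" and \<chi>' :: "('w, 'm) etree" +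
  assumes same_D: "D_chi \<chi> = D_chi \<chi>'"
begin

lemma same_axis_domain: "axis \<chi> i \<noteq> None \<longleftrightarrow> axis \<chi>' i \<noteq> None"
  using X.axis_defined_iff Y.axis_defined_iff same_D by simp

lemma same_agreement:
  "axis \<chi> i \<noteq> None \<and> act \<chi> m (X.axv i) = act \<chi> m' (X.axv i) \<longleftrightarrow>
   axis \<chi>' i \<noteq> None \<and> act \<chi>' m (Y.axv i) = act \<chi>' m' (Y.axv i)"
  using X.D_chi_ge_iff Y.D_chi_ge_iff same_D by simp

lemma orbit_pdepth:
  "axis \<chi> i \<noteq> None \<Longrightarrow> pdepth (root \<chi>) (parent \<chi>) (act \<chi> m (X.axv i)) = i"
  "axis \<chi>' i \<noteq> None \<Longrightarrow> pdepth (root \<chi>') (parent \<chi>') (act \<chi>' m (Y.axv i)) = i"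
  using X.act_pdepth X.axis_vertex Y.act_pdepth Y.axis_vertex by simp_all

definition transfer :: "'v \<Rightarrow> 'w" where
  "transfer v =
     (let i = pdepth (root \<chi>) (parent \<chi>) v in act \<chi>' (SOME m. v = act \<chi> m (X.axv i)) (Y.axv i))"

text \<open>The choice of \<open>m\<close> in \<open>transfer\<close> does not matter, by \<open>same_agreement\<close>.\<close>
lemma transfer_orbit:
  assumes i: "axis \<chi> i \<noteq> None"
  shows "transfer (act \<chi> m (X.axv i)) = act \<chi>' m (Y.axv i)"
proof -
  let ?v = "act \<chi> m (X.axv i)"
  let ?m = "SOME m'. ?v = act \<chi> m' (X.axv i)"
  have "?v = act \<chi> ?m (X.axv i)" by (rule someI) (rule refl)
  then have "act \<chi>' ?m (Y.axv i) = act \<chi>' m (Y.axv i)" using same_agreement i by metis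
  then show ?thesis unfolding transfer_def Let_def using orbit_pdepth(1)[OF i] by simp
qed

lemma transfer_bij: "bij_betw transfer (verts \<chi>) (verts \<chi>')"
  unfolding bij_betw_def
proof
  show "inj_on transfer (verts \<chi>)"
  proof
    fix u v assume "u \<in> verts \<chi>" "v \<in> verts \<chi>" and eq: "transfer u = transfer v"
    obtain m i where u: "axis \<chi> i \<noteq> None" "u = act \<chi> m (X.axv i)"
      using X.vertex_on_axis_orbit[OF \<open>u \<in> verts \<chi>\<close>] by blast
    obtain m' j where v: "axis \<chi> j \<noteq> None" "v = act \<chi> m' (X.axv j)"
      using X.vertex_on_axis_orbit[OF \<open>v \<in> verts \<chi>\<close>] by blast
    have images: "act \<chi>' m (Y.axv i) = act \<chi>' m' (Y.axv j)"
      using eq transfer_orbit u v by simp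
    then have "i = j" using orbit_pdepth(2) same_axis_domain u(1) v(1) by metis
    then show "u = v" using images same_agreement u v by metis
  qed
  show "transfer ` verts \<chi> = verts \<chi>'"
  proof
    show "transfer ` verts \<chi> \<subseteq> verts \<chi>'"
    proof
      fix w assume "w \<in> transfer ` verts \<chi>"
      then obtain v where "v \<in> verts \<chi>" "w = transfer v" by blast
      then obtain m i where i: "axis \<chi> i \<noteq> None" and "w = act \<chi>' m (Y.axv i)"
        using X.vertex_on_axis_orbit transfer_orbit by metis
      then show "w \<in> verts \<chi>'"
        using Y.act_in_verts Y.axis_vertex same_axis_domain by simp
    qed
    show "verts \<chi>' \<subseteq> transfer ` verts \<chi>"
    proof
      fix w assume "w \<in> verts \<chi>'"
      then obtain m i where i: "axis \<chi> i \<noteq> None" and "w = act \<chi>' m (Y.axv i)"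
        using Y.vertex_on_axis_orbit same_axis_domain by metis
      then have "w = transfer (act \<chi> m (X.axv i))" "act \<chi> m (X.axv i) \<in> verts \<chi>"
        using transfer_orbit X.act_in_verts X.axis_vertex by simp_all
      then show "w \<in> transfer ` verts \<chi>" by blast
    qed
  qed
qed

lemma transfer_in_verts: "v \<in> verts \<chi> \<Longrightarrow> transfer v \<in> verts \<chi>'"
  using transfer_bij bij_betwE by blast

lemma axv_0: "X.axv 0 = root \<chi>" "Y.axv 0 = root \<chi>'"
  using X.axis_vertex[of 0] Y.axis_vertex[of 0] is_rayD(1)[OF X.axis_ray] is_rayD(1)[OF Y.axis_ray]
  by auto

lemma transfer_root: "transfer (root \<chi>) = root \<chi>'"
  using transfer_orbit[of 0 1] X.act_one Y.act_one axv_0 is_rayD(1)[OF X.axis_ray]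
    root_in_V[OF X.tree] root_in_V[OF Y.tree]
  by simp

lemma transfer_parent:
  assumes "v \<in> verts \<chi>" "v \<noteq> root \<chi>"
  shows "transfer v \<noteq> root \<chi>' \<and> transfer (parent \<chi> v) = parent \<chi>' (transfer v)"
proof -
  obtain m i where i: "axis \<chi> i \<noteq> None" and v: "v = act \<chi> m (X.axv i)"
    using X.vertex_on_axis_orbit[OF assms(1)] by blast
  have "i \<noteq> 0"
  proof
    assume "i = 0"
    then show False using assms(2) v X.act_root axv_0 by simp
  qed
  then obtain k where k: "i = Suc k" by (cases i) auto
  have ax: "axis \<chi> (Suc k) \<noteq> None" "axis \<chi>' (Suc k) \<noteq> None"
    using i k same_axis_domain by auto
  have tv: "transfer v = act \<chi>' m (Y.axv (Suc k))" using transfer_orbit i v k by simp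
  then have "pdepth (root \<chi>') (parent \<chi>') (transfer v) = Suc k"
    using orbit_pdepth(2)[OF ax(2)] by simp
  then have "transfer v \<noteq> root \<chi>'" by auto
  moreover have "parent \<chi> v = act \<chi> m (X.axv k)"
    using X.act_parent[OF X.axv_parent(3,2)[OF ax(1)]] X.axv_parent(1)[OF ax(1)] v k by simp
  moreover have "parent \<chi>' (transfer v) = act \<chi>' m (Y.axv k)"
    using Y.act_parent[OF Y.axv_parent(3,2)[OF ax(2)]] Y.axv_parent(1)[OF ax(2)] tv by simp
  ultimately show ?thesis
    using transfer_orbit[OF X.axis_defined_below[OF ax(1)]] by simp
qed

lemma transfer_contraction: "elliptic_contraction \<chi> \<chi>' transfer"
  using X.tree Y.tree transfer_in_verts transfer_root transfer_parent
  by (rule parent_map_elliptic_contraction)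

lemma transfer_axis: "ray_map transfer (axis \<chi>) = axis \<chi>'"
proof
  fix i
  show "ray_map transfer (axis \<chi>) i = axis \<chi>' i"
  proof (cases "axis \<chi> i = None")
    case False
    then have "transfer (X.axv i) = Y.axv i"
      using transfer_orbit[OF False, of 1] X.act_one Y.act_one X.axis_vertex Y.axis_vertex
        same_axis_domain by simp
    then show ?thesis
      using False X.axis_vertex Y.axis_vertex same_axis_domain by (simp add: ray_map_def)
  qed (use same_axis_domain[of i] in \<open>simp add: ray_map_def\<close>)
qed

lemma transfer_equivariant:
  assumes "v \<in> verts \<chi>"
  shows "transfer (act \<chi> n v) = act \<chi>' n (transfer v)"
proof -
  obtain m i where i: "axis \<chi> i \<noteq> None" and v: "v = act \<chi> m (X.axv i)"
    using X.vertex_on_axis_orbit[OF assms] by blast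
  have "transfer (act \<chi> n v) = transfer (act \<chi> (m * n) (X.axv i))"
    using X.act_mult X.axis_vertex i v by simp
  also have "\<dots> = act \<chi>' (m * n) (Y.axv i)" using transfer_orbit[OF i] .
  also have "\<dots> = act \<chi>' n (transfer v)"
    using Y.act_mult Y.axis_vertex same_axis_domain i v transfer_orbit by simp
  finally show ?thesis .
qed

lemma isomorphic: "etree_isomorphic \<chi> \<chi>'"
  unfolding etree_isomorphic_def etree_iso_def
  using transfer_bij transfer_contraction transfer_axis transfer_equivariant by blast

end

lemma same_D_chi_isomorphic:
  fixes \<chi> :: "('v, 'm::monoid_mult) etree" and \<chi>' :: "('w, 'm) etree"
  assumes "elliptic_tree \<chi>" "elliptic_tree \<chi>'" "D_chi \<chi> = D_chi \<chi>'"
  shows "etree_isomorphic \<chi> \<chi>'"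
  using assms by (intro elliptic_M_tree_pair.isomorphic elliptic_M_tree_pair.intro
      elliptic_M_tree_pair_axioms.intro elliptic_M_tree.intro)

lemma D_chi_strict_length_function:
  "elliptic_tree \<chi> \<Longrightarrow> strongly_faithful \<chi> \<Longrightarrow> strict_length_function (D_chi \<chi>)"
  by (rule elliptic_M_tree.D_chi_strict[OF elliptic_M_tree.intro])

section \<open>The elliptic M-tree of a strict length function\<close>

text \<open>The level-\<open>i\<close> class of \<open>m\<close>; for \<open>i \<le> D 1 1\<close> these classes partition \<open>M\<close>, and the
  classes of level \<open>i + 1\<close> refine those of level \<open>i\<close>.\<close>
definition level_class :: "('m \<Rightarrow> 'm \<Rightarrow> enat) \<Rightarrow> nat \<Rightarrow> 'm \<Rightarrow> 'm set" where
  "level_class D i m = {x. enat i \<le> D m x}"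

definition class_rep :: "'m set \<Rightarrow> 'm" where
  "class_rep C = (SOME c. c \<in> C)"

text \<open>The tree of classes: a vertex is a level \<open>i \<le> D 1 1\<close> together with a level-\<open>i\<close>
  class, its parent is the coarser class one level up, \<open>n\<close> acts by right multiplication of
  representatives, and the axis runs through the classes of \<open>1\<close>.\<close>
definition class_verts :: "('m::monoid_mult \<Rightarrow> 'm \<Rightarrow> enat) \<Rightarrow> (nat \<times> 'm set) set" where
  "class_verts D = {(i, level_class D i m) | i m. enat i \<le> D 1 1}"

definition class_parent :: "('m \<Rightarrow> 'm \<Rightarrow> enat) \<Rightarrow> nat \<times> 'm set \<Rightarrow> nat \<times> 'm set" where
  "class_parent D v = (fst v - 1, level_class D (fst v - 1) (class_rep (snd v)))"

definition class_act :: "('m::monoid_mult \<Rightarrow> 'm \<Rightarrow> enat) \<Rightarrow> 'm \<Rightarrow> nat \<times> 'm set \<Rightarrow> nat \<times> 'm set"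
  where "class_act D n v = (fst v, level_class D (fst v) (class_rep (snd v) * n))"

definition class_axis :: "('m::monoid_mult \<Rightarrow> 'm \<Rightarrow> enat) \<Rightarrow> nat \<Rightarrow> (nat \<times> 'm set) option" where
  "class_axis D i = (if enat i \<le> D 1 1 then Some (i, level_class D i 1) else None)"

definition class_tree :: "('m::monoid_mult \<Rightarrow> 'm \<Rightarrow> enat) \<Rightarrow> (nat \<times> 'm set, 'm) etree" where
  "class_tree D = \<lparr>root = (0, UNIV), verts = class_verts D, parent = class_parent D,
     axis = class_axis D, act = class_act D\<rparr>"

lemma level_class_0 [simp]: "level_class D 0 m = UNIV"
  unfolding level_class_def by (simp add: zero_enat_def[symmetric])

lemma level_le: "enat i \<le> (d :: enat) \<Longrightarrow> j \<le> i \<Longrightarrow> enat j \<le> d"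
  by (meson enat_ord_simps(1) order_trans)

context
  fixes D :: "'m::monoid_mult \<Rightarrow> 'm \<Rightarrow> enat"
  assumes strict: "strict_length_function D"
begin

lemma D_sym: "D m m' = D m' m"
  using strict unfolding strict_length_function_def length_function_def by blast

lemma D_le_diag: "D m' m'' \<le> D m m"
  using strict unfolding strict_length_function_def length_function_def by blast

lemma D_right_mult: "D m' m'' \<le> D (m' * m) (m'' * m)"
  using strict unfolding strict_length_function_def length_function_def by blast

lemma D_ultrametric: "min (D m m') (D m' m'') \<le> D m m''"
  using strict unfolding strict_length_function_def length_function_def by blast

lemma D_strict: "D m' m'' = D m m \<Longrightarrow> m' = m''"
  using strict unfolding strict_length_function_def by blast

lemma D_diag: "D m m = D 1 1"
  using D_le_diag[of m m 1] D_le_diag[of 1 1 m] by (rule order_antisym)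

lemma level_class_self: "enat i \<le> D 1 1 \<Longrightarrow> m \<in> level_class D i m"
  unfolding level_class_def using D_diag[of m] by simp

text \<open>By (L1) and (L4), "\<open>D m m' \<ge> i\<close>" is an equivalence relation.\<close>
lemma level_class_eq_iff:
  assumes "enat i \<le> D 1 1"
  shows "level_class D i m = level_class D i m' \<longleftrightarrow> enat i \<le> D m m'"
proof
  assume "level_class D i m = level_class D i m'"
  then have "m' \<in> level_class D i m" using level_class_self[OF assms, of m'] by simp
  then show "enat i \<le> D m m'" unfolding level_class_def by simp
next
  assume close: "enat i \<le> D m m'"
  have trans: "enat i \<le> D p x" if "enat i \<le> D p q" "enat i \<le> D q x" for p q x
    using D_ultrametric[of p q x] that by (simp add: min_def split: if_splits)
  show "level_class D i m = level_class D i m'"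
    unfolding level_class_def using trans close D_sym[of m m'] by metis
qed

lemma class_rep_in: "enat i \<le> D 1 1 \<Longrightarrow> class_rep (level_class D i m) \<in> level_class D i m"
  unfolding class_rep_def using level_class_self by (metis someI)

lemma level_class_coarsen:
  assumes "enat i \<le> D 1 1" "j \<le> i" "c \<in> level_class D i m"
  shows "level_class D j c = level_class D j m"
proof -
  have "enat j \<le> D m c"
    using assms(2,3) unfolding level_class_def by (meson enat_ord_simps(1) order_trans mem_Collect_eq)
  then show ?thesis using level_class_eq_iff level_le[OF assms(1,2)] D_sym by metis
qed

lemma class_parent_eq:
  "enat i \<le> D 1 1 \<Longrightarrow> class_parent D (i, level_class D i m) = (i - 1, level_class D (i - 1) m)"
  unfolding class_parent_def using level_class_coarsen class_rep_in by simp

text \<open>The action is well defined on classes by (L3).\<close>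
lemma class_act_eq:
  assumes "enat i \<le> D 1 1"
  shows "class_act D n (i, level_class D i m) = (i, level_class D i (m * n))"
proof -
  let ?c = "class_rep (level_class D i m)"
  have "enat i \<le> D m ?c" using class_rep_in[OF assms] unfolding level_class_def by simp
  then have "enat i \<le> D (m * n) (?c * n)" using D_right_mult[of m ?c n] by (meson order_trans)
  then have "level_class D i (?c * n) = level_class D i (m * n)"
    using level_class_eq_iff[OF assms] D_sym by metis
  then show ?thesis unfolding class_act_def by simp
qed

lemma class_vertE:
  assumes "v \<in> class_verts D"
  obtains i m where "v = (i, level_class D i m)" "enat i \<le> D 1 1"
  using assms unfolding class_verts_def by blast

lemma class_vertI: "enat i \<le> D 1 1 \<Longrightarrow> (i, level_class D i m) \<in> class_verts D"
  unfolding class_verts_def by blast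

lemma class_root: "(0, UNIV) \<in> class_verts D"
  using class_vertI[of 0 1] level_class_0 by (simp add: zero_enat_def[symmetric])

lemma class_parent_iter:
  "enat i \<le> D 1 1 \<Longrightarrow> (class_parent D ^^ k) (i, level_class D i m) = (i - k, level_class D (i - k) m)"
proof (induction k)
  case (Suc k)
  then show ?case using class_parent_eq level_le[OF Suc.prems, of "i - k"] by simp
qed simp

lemma class_rooted: "rooted_tree (0, UNIV) (class_verts D) (class_parent D)"
  unfolding rooted_tree_def
proof (intro conjI ballI)
  show "(0, UNIV) \<in> class_verts D" by (rule class_root)
next
  fix v assume "v \<in> class_verts D - {(0, UNIV)}"
  then obtain i m where "v = (i, level_class D i m)" "enat i \<le> D 1 1"
    using class_vertE by blast
  then show "class_parent D v \<in> class_verts D"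
    using class_parent_eq class_vertI level_le by simp
next
  fix v assume "v \<in> class_verts D"
  then obtain i m where "v = (i, level_class D i m)" "enat i \<le> D 1 1"
    using class_vertE by blast
  then have "(class_parent D ^^ i) v = (0, UNIV)"
    using class_parent_iter level_class_0 by simp
  then show "\<exists>n. (class_parent D ^^ n) v = (0, UNIV)" ..
qed

lemma class_pdepth:
  assumes "enat i \<le> D 1 1"
  shows "pdepth (0, UNIV) (class_parent D) (i, level_class D i m) = i"
  using assms
proof (induction i)
  case 0 then show ?case using level_class_0 by simp
next
  case (Suc i)
  have "enat i \<le> D 1 1" using Suc.prems level_le by simp
  then show ?case
    using pdepth_parent[OF class_rooted class_vertI[OF Suc.prems]] Suc class_parent_eq by simp
qed

lemma class_ray_vertex:
  assumes "is_ray (0, UNIV) (class_verts D) (class_parent D) \<rho>" "\<rho> i = Some w"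
  shows "w \<in> class_verts D \<and> fst w = i"
proof -
  have w: "w \<in> class_verts D" "pdepth (0, UNIV) (class_parent D) w = i"
    using ray_vertex[OF class_rooted assms] by auto
  obtain j m where "w = (j, level_class D j m)" "enat j \<le> D 1 1" by (rule class_vertE[OF w(1)])
  then show ?thesis using w class_pdepth by simp
qed

lemma class_maximal_ray_len:
  assumes max: "maximal_ray (0, UNIV) (class_verts D) (class_parent D) \<rho>"
  shows "ray_len \<rho> = D 1 1"
proof -
  have ray: "is_ray (0, UNIV) (class_verts D) (class_parent D) \<rho>"
    using max unfolding maximal_ray_def by blast
  have reaches: "\<rho> i \<noteq> None" if "enat i \<le> D 1 1" for i
    using that
  proof (induction i)
    case 0 then show ?case using is_rayD(1)[OF ray] by simp
  next
    case (Suc i)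
    have "enat i \<le> D 1 1" using level_le[OF Suc.prems, of i] by simp
    then obtain w where w: "\<rho> i = Some w" using Suc.IH by blast
    have "w \<in> class_verts D" "fst w = i" using class_ray_vertex[OF ray w] by auto
    then obtain m where wm: "w = (i, level_class D i m)" by (auto elim: class_vertE)
    let ?child = "(Suc i, level_class D (Suc i) m)"
    have "class_parent D ?child = w" using class_parent_eq[OF Suc.prems] wm by simp
    moreover have "?child \<in> class_verts D" "?child \<noteq> (0, UNIV)"
      using class_vertI[OF Suc.prems] by auto
    ultimately show ?case using maximal_ray_continues[OF max] w by metis
  qed
  show ?thesis
  proof (rule enat_eq_by_nat)
    fix i
    show "enat i \<le> ray_len \<rho> \<longleftrightarrow> enat i \<le> D 1 1"
    proof
      assume "enat i \<le> ray_len \<rho>"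
      then obtain w where "\<rho> i = Some w" using ray_defined_iff[OF ray] by blast
      then have "w \<in> class_verts D" "fst w = i" using class_ray_vertex[OF ray] by auto
      then show "enat i \<le> D 1 1" by (auto elim: class_vertE)
    qed (use reaches ray_defined_iff[OF ray] in blast)
  qed
qed

lemma class_axis_ray: "is_ray (0, UNIV) (class_verts D) (class_parent D) (class_axis D)"
  unfolding is_ray_def
proof (rule conjI[OF _ conjI]; (intro allI impI)?)
  show "class_axis D 0 = Some (0, UNIV)"
    unfolding class_axis_def by (simp add: zero_enat_def[symmetric])
  show "class_axis D (Suc j) = None" if "class_axis D j = None" for j
    using that level_le unfolding class_axis_def by (auto split: if_splits)
  show "w \<in> class_verts D \<and> w \<noteq> (0, UNIV) \<and> class_axis D j = Some (class_parent D w)"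
    if "class_axis D (Suc j) = Some w" for j w
  proof -
    have L: "enat (Suc j) \<le> D 1 1" and w: "w = (Suc j, level_class D (Suc j) 1)"
      using that unfolding class_axis_def by (auto split: if_splits)
    then show ?thesis
      using class_vertI[OF L] class_parent_eq[OF L] level_le[OF L, of j]
      unfolding class_axis_def by simp
  qed
qed

text \<open>The axis is maximal: a ray extending it can only live at levels \<open>\<le> D 1 1\<close>.\<close>
lemma class_axis_maximal: "maximal_ray (0, UNIV) (class_verts D) (class_parent D) (class_axis D)"
  unfolding maximal_ray_def
proof (intro conjI allI impI class_axis_ray)
  fix \<sigma> assume extends: "is_ray (0, UNIV) (class_verts D) (class_parent D) \<sigma> \<and> class_axis D \<subseteq>\<^sub>m \<sigma>"
  show "\<sigma> = class_axis D"
  proof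
    fix j show "\<sigma> j = class_axis D j"
    proof (cases "enat j \<le> D 1 1")
      case True
      then have "class_axis D j = Some (j, level_class D j 1)" unfolding class_axis_def by simp
      then show ?thesis using extends unfolding map_le_def by (metis domI)
    next
      case False
      have "\<sigma> j = None"
      proof (rule ccontr)
        assume "\<sigma> j \<noteq> None"
        then obtain w where "\<sigma> j = Some w" by blast
        then have "w \<in> class_verts D" "fst w = j" using class_ray_vertex extends by blast+
        then show False using False by (auto elim: class_vertE)
      qed
      then show ?thesis using False unfolding class_axis_def by simp
    qed
  qed
qed

text \<open>Right multiplication fixes the root and commutes with the parent map, hence is an
  elliptic contraction by \<open>parent_map_elliptic_contraction\<close>.\<close>
lemma class_act_contraction: "elliptic_contraction (class_tree D) (class_tree D) (class_act D n)"
proof -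
  have into: "class_act D n v \<in> class_verts D" if "v \<in> class_verts D" for v
    using that by (rule class_vertE) (simp add: class_act_eq class_vertI)
  have root: "class_act D n (0, UNIV) = (0, UNIV)"
    using class_act_eq[of 0 n 1] level_class_0 by (simp add: zero_enat_def[symmetric])
  have parent: "class_act D n v \<noteq> (0, UNIV) \<and>
      class_act D n (class_parent D v) = class_parent D (class_act D n v)"
    if "v \<in> class_verts D" "v \<noteq> (0, UNIV)" for v
    using that(1)
  proof (rule class_vertE)
    fix i m assume v: "v = (i, level_class D i m)" and L: "enat i \<le> D 1 1"
    have "i \<noteq> 0" using v that(2) level_class_0 by auto
    then show ?thesis
      using v class_act_eq[OF L] class_act_eq[OF level_le[OF L, of "i - 1"]] class_parent_eq[OF L]
      by simp
  qed
  show ?thesis unfolding class_tree_def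
    by (rule parent_map_elliptic_contraction) (simp_all add: class_rooted into root parent)
qed

lemma class_verts_on_axis_orbits:
  "class_verts D = {class_act D m v |m v. \<exists>i. class_axis D i = Some v}"
proof
  show "class_verts D \<subseteq> {class_act D m v |m v. \<exists>i. class_axis D i = Some v}"
  proof
    fix v assume "v \<in> class_verts D"
    then obtain i m where v: "v = (i, level_class D i m)" and L: "enat i \<le> D 1 1"
      by (rule class_vertE)
    then have "v = class_act D m (i, level_class D i 1)" "class_axis D i = Some (i, level_class D i 1)"
      using class_act_eq[OF L] unfolding class_axis_def by simp_all
    then show "v \<in> {class_act D m v |m v. \<exists>i. class_axis D i = Some v}" by blast
  qed
  show "{class_act D m v |m v. \<exists>i. class_axis D i = Some v} \<subseteq> class_verts D"
  proof
    fix x assume "x \<in> {class_act D m v |m v. \<exists>i. class_axis D i = Some v}"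
    then obtain m i where x: "x = class_act D m (i, level_class D i 1)" and L: "enat i \<le> D 1 1"
      unfolding class_axis_def by (auto split: if_splits)
    then show "x \<in> class_verts D" using class_act_eq[OF L] class_vertI[OF L] by simp
  qed
qed

lemma class_tree_elliptic: "elliptic_tree (class_tree D)"
  unfolding elliptic_tree_def
proof (intro conjI allI ballI)
  show "uniform_tree (root (class_tree D)) (verts (class_tree D)) (parent (class_tree D))"
    unfolding uniform_tree_def class_tree_def using class_rooted class_maximal_ray_len by simp
  show "maximal_ray (root (class_tree D)) (verts (class_tree D)) (parent (class_tree D))
      (axis (class_tree D))"
    unfolding class_tree_def using class_axis_maximal by simp
  show "elliptic_contraction (class_tree D) (class_tree D) (act (class_tree D) m)" for m
    using class_act_contraction unfolding class_tree_def by simp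
  show "verts (class_tree D) = {act (class_tree D) m v |m v. \<exists>i. axis (class_tree D) i = Some v}"
    using class_verts_on_axis_orbits unfolding class_tree_def by simp
next
  fix v assume "v \<in> verts (class_tree D)"
  then obtain i m where v: "v = (i, level_class D i m)" and L: "enat i \<le> D 1 1"
    unfolding class_tree_def by (auto elim: class_vertE)
  show "act (class_tree D) 1 v = v"
    using v class_act_eq[OF L] unfolding class_tree_def by simp
  show "act (class_tree D) (m' * m'') v = act (class_tree D) m'' (act (class_tree D) m' v)" for m' m''
    using v class_act_eq[OF L] unfolding class_tree_def by (simp add: mult.assoc)
qed

text \<open>The class tree realises \<open>D\<close>: the images of the axis under \<open>m\<close> and \<open>m'\<close> agree at
  level \<open>i\<close> iff \<open>m\<close> and \<open>m'\<close> lie in the same level-\<open>i\<close> class.\<close>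
lemma D_chi_class_tree: "D_chi (class_tree D) = D"
proof (intro ext enat_eq_by_nat)
  interpret elliptic_M_tree "class_tree D" by (rule elliptic_M_tree.intro[OF class_tree_elliptic])
  fix m m' i
  show "enat i \<le> D_chi (class_tree D) m m' \<longleftrightarrow> enat i \<le> D m m'"
  proof (cases "enat i \<le> D 1 1")
    case True
    then have "axv i = (i, level_class D i 1)" unfolding axv_def by (simp add: class_tree_def class_axis_def)
    then show ?thesis
      using True D_chi_ge_iff class_act_eq[OF True] level_class_eq_iff[OF True]
      by (simp add: class_tree_def class_axis_def)
  next
    case False
    then show ?thesis
      using D_chi_ge_iff D_le_diag[of m m' 1] order_trans
      by (simp add: class_tree_def class_axis_def)
  qed
qed

text \<open>Strong faithfulness is (L5): equal images of the axis force \<open>D m m' = D 1 1 = D m m\<close>.\<close>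
lemma class_tree_strongly_faithful: "strongly_faithful (class_tree D)"
  unfolding strongly_faithful_def
proof (intro allI impI)
  fix m m'
  assume same: "ray_map (act (class_tree D) m) (axis (class_tree D)) =
                ray_map (act (class_tree D) m') (axis (class_tree D))"
  have "D 1 1 \<le> D m m'"
  proof (rule enat_le_by_nat)
    fix i assume L: "enat i \<le> D 1 1"
    have "ray_map (class_act D m) (class_axis D) i = ray_map (class_act D m') (class_axis D) i"
      using same unfolding class_tree_def by simp
    then have "level_class D i m = level_class D i m'"
      using L class_act_eq[OF L] unfolding ray_map_def class_axis_def by simp
    then show "enat i \<le> D m m'" using level_class_eq_iff[OF L] by simp
  qed
  then have "D m m' = D m m" using D_le_diag D_diag by (metis order_antisym)
  then show "m = m'" using D_strict by blast
qed

lemma strict_length_function_realised: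
  "\<exists>\<chi> :: (nat \<times> 'm set, 'm) etree. elliptic_tree \<chi> \<and> strongly_faithful \<chi> \<and> D = D_chi \<chi>"
  using class_tree_elliptic class_tree_strongly_faithful D_chi_class_tree by metis

end

theorem corollary4p9:
  fixes D :: "'m::monoid_mult \<Rightarrow> 'm \<Rightarrow> enat"
  shows "(strict_length_function D \<longleftrightarrow>
           (\<exists>\<chi> :: (nat \<times> 'm set, 'm) etree.
               elliptic_tree \<chi> \<and> strongly_faithful \<chi> \<and> D = D_chi \<chi>)) \<and>
         (\<forall>\<chi> :: ('v, 'm) etree.
           elliptic_tree \<chi> \<and> strongly_faithful \<chi> \<and> D = D_chi \<chi> \<longrightarrow>
           strict_length_function D) \<and>
         (\<forall>(\<chi> :: ('v, 'm) etree) (\<chi>' :: ('w, 'm) etree).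
           elliptic_tree \<chi> \<and> strongly_faithful \<chi> \<and> D = D_chi \<chi> \<and>
           elliptic_tree \<chi>' \<and> strongly_faithful \<chi>' \<and> D = D_chi \<chi>' \<longrightarrow>
           etree_isomorphic \<chi> \<chi>')"
proof (intro conjI allI impI iffI)
  show "\<exists>\<chi> :: (nat \<times> 'm set, 'm) etree. elliptic_tree \<chi> \<and> strongly_faithful \<chi> \<and> D = D_chi \<chi>"
    if "strict_length_function D"
    using strict_length_function_realised[OF that] .
  show "strict_length_function D"
    if "\<exists>\<chi> :: (nat \<times> 'm set, 'm) etree. elliptic_tree \<chi> \<and> strongly_faithful \<chi> \<and> D = D_chi \<chi>"
    using that D_chi_strict_length_function by blast
  show "strict_length_function D"
    if "elliptic_tree \<chi> \<and> strongly_faithful \<chi> \<and> D = D_chi \<chi>" for \<chi> :: "('v, 'm) etree"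
    using that D_chi_strict_length_function by blast
  show "etree_isomorphic \<chi> \<chi>'"
    if "elliptic_tree \<chi> \<and> strongly_faithful \<chi> \<and> D = D_chi \<chi> \<and>
        elliptic_tree \<chi>' \<and> strongly_faithful \<chi>' \<and> D = D_chi \<chi>'"
    for \<chi> :: "('v, 'm) etree" and \<chi>' :: "('w, 'm) etree"
    using that same_D_chi_isomorphic by metis
qed

end
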